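(* Let $012345$ be a convex hexagon with area $A$. For $i=0,\dots,5$ (indices mod $6$), let $(i)$ denote the area of the vertex triangle with vertices $i-1,i,i+1$, and let $p$ be the area of the triangle $013$. Then $$\begin{aligned} &[p-(1)]A^2\\ &+\big[(1)(4)+2(1)(2)+(1)(5)-p^2+(1)p+(0)(1)-(2)p-(3)p-(5)p-(4)p-(0)(2)-(0)p\big]A\\ &-(1)(2)(5)-(1)(2)p-(1)(2)(4)-(1)(4)(5)-(1)(2)^2+(2)(3)p+(3)p^2-(0)(1)(5)\\ &+(0)(2)^2+(4)(5)p-(0)(1)(2)+(0)(2)(5)+(0)p^2-(0)(1)p+2(0)(2)p+(0)(5)p+(3)(4)p=0. \end{aligned}$$
   Context: The vertices of the hexagon are labelled $0,\dots,5$ in cyclic order. *)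

theory Defs
  imports Complex_Main
begin

type_synonym point = "real \<times> real"

definition cross :: "point \<Rightarrow> point \<Rightarrow> point \<Rightarrow> real" where
  "cross a b c = (fst b - fst a) * (snd c - snd a) - (snd b - snd a) * (fst c - fst a)"

definition tri_area :: "point \<Rightarrow> point \<Rightarrow> point \<Rightarrow> real" where
  "tri_area a b c = \<bar>cross a b c\<bar> / 2"

definition convex_hexagon :: "(nat \<Rightarrow> point) \<Rightarrow> bool" where
  "convex_hexagon P \<longleftrightarrow>
     (\<forall>i<6. \<forall>j<6. j \<noteq> i \<and> j \<noteq> (i+1) mod 6 \<longrightarrow> cross (P i) (P ((i+1) mod 6)) (P j) > 0) \<or>
     (\<forall>i<6. \<forall>j<6. j \<noteq> i \<and> j \<noteq> (i+1) mod 6 \<longrightarrow> cross (P i) (P ((i+1) mod 6)) (P j) < 0)"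

definition polygon_area :: "nat \<Rightarrow> (nat \<Rightarrow> point) \<Rightarrow> real" where
  "polygon_area n P = \<bar>\<Sum>i<n. fst (P i) * snd (P ((i+1) mod n)) - fst (P ((i+1) mod n)) * snd (P i)\<bar> / 2"

definition vtri :: "(nat \<Rightarrow> point) \<Rightarrow> nat \<Rightarrow> real" where
  "vtri P i = tri_area (P ((i+5) mod 6)) (P (i mod 6)) (P ((i+1) mod 6))"

end

theory Submission
  imports Defs
begin

text \<open>Write d i j for the signed double area cross (P 0) (P i) (P j) of the fan from vertex 0.
  A convex hexagon has an orientation sign s, +1 or -1, making all its triangles positively
  oriented, so every area in the statement is s/2 times a linear form in the d i j: the hexagon by
  triangulating it from vertex 0, each vertex triangle by splitting it at vertex 0. After this
  substitution the polynomial becomes -(s/2)^3 (d 3 5 R(1,2,3,4) + d 2 3 R(1,3,4,5)), where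
  R(a,b,c,e) = d a b * d c e - d a c * d b e + d a e * d b c is the three-term Pluecker relation,
  which vanishes for any five points of the plane.\<close>

lemma hexagon_polynomial_fan_coordinates:
  fixes d :: "nat \<Rightarrow> nat \<Rightarrow> real" and c A p a0 a1 a2 a3 a4 a5 :: real
  assumes "A = c * (d 1 2 + d 2 3 + d 3 4 + d 4 5)" and "p = c * d 1 3"
    and "a0 = c * d 1 5" and "a1 = c * d 1 2" and "a2 = c * (d 1 2 + d 2 3 - d 1 3)"
    and "a3 = c * (d 2 3 + d 3 4 - d 2 4)" and "a4 = c * (d 3 4 + d 4 5 - d 3 5)" and "a5 = c * d 4 5"
  shows "(p - a1) * A^2
    + (a1*a4 + 2*a1*a2 + a1*a5 - p^2 + a1*p + a0*a1 - a2*p - a3*p - a5*p - a4*p - a0*a2 - a0*p) * A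
    - a1*a2*a5 - a1*a2*p - a1*a2*a4 - a1*a4*a5 - a1*a2^2 + a2*a3*p + a3*p^2 - a0*a1*a5
    + a0*a2^2 + a4*a5*p - a0*a1*a2 + a0*a2*a5 + a0*p^2 - a0*a1*p + 2*a0*a2*p + a0*a5*p + a3*a4*p
    = - (c ^ 3) * (d 3 5 * (d 1 2 * d 3 4 - d 1 3 * d 2 4 + d 1 4 * d 2 3)
                  + d 2 3 * (d 1 3 * d 4 5 - d 1 4 * d 3 5 + d 1 5 * d 3 4))"
  unfolding assms by algebra

lemma cross_rotate: "cross a b c = cross b c a"
  unfolding cross_def by algebra

lemma cross_fan_split: "cross a b c = cross q a b + cross q b c - cross q a c"
  unfolding cross_def by algebra

lemma cross_degenerate: "cross a a b = 0"
  by (simp add: cross_def)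

lemma cross_pluecker:
  "cross q a b * cross q c d - cross q a c * cross q b d + cross q a d * cross q b c = 0"
  unfolding cross_def by algebra

lemma shoelace_path_fan:
  fixes P :: "nat \<Rightarrow> point"
  shows "(\<Sum>i<k. cross (0, 0) (P i) (P (Suc i))) + cross (0, 0) (P k) (P 0)
    = (\<Sum>i<k. cross (P 0) (P i) (P (Suc i)))"
proof (induction k)
  case 0
  show ?case by (simp add: cross_def)
next
  case (Suc k)
  have "cross (P 0) (P k) (P (Suc k))
      = cross (0, 0) (P k) (P (Suc k)) + cross (0, 0) (P (Suc k)) (P 0) - cross (0, 0) (P k) (P 0)"
    by (simp add: cross_def algebra_simps)
  with Suc.IH show ?case by simp
qed

lemma shoelace_sum_fan:
  fixes P :: "nat \<Rightarrow> point"
  shows "(\<Sum>i<Suc k. fst (P i) * snd (P ((i+1) mod Suc k)) - fst (P ((i+1) mod Suc k)) * snd (P i))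
    = (\<Sum>i<k. cross (P 0) (P i) (P (Suc i)))"
proof -
  have "(\<Sum>i<Suc k. fst (P i) * snd (P ((i+1) mod Suc k)) - fst (P ((i+1) mod Suc k)) * snd (P i))
      = (\<Sum>i<Suc k. cross (0, 0) (P i) (P ((i+1) mod Suc k)))"
    by (simp add: cross_def mult.commute)
  also have "\<dots> = (\<Sum>i<k. cross (0, 0) (P i) (P (Suc i))) + cross (0, 0) (P k) (P 0)"
    by (simp add: sum.lessThan_Suc)
  finally show ?thesis using shoelace_path_fan by simp
qed

definition oriented_hexagon :: "real \<Rightarrow> (nat \<Rightarrow> point) \<Rightarrow> bool" where
  "oriented_hexagon s P \<longleftrightarrow>
     (\<forall>i<6. \<forall>j<6. j \<noteq> i \<and> j \<noteq> (i+1) mod 6 \<longrightarrow>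
        0 < s * cross (P i) (P ((i+1) mod 6)) (P j))"

lemma convex_hexagon_iff_oriented:
  "convex_hexagon P \<longleftrightarrow> oriented_hexagon 1 P \<or> oriented_hexagon (-1) P"
  unfolding convex_hexagon_def oriented_hexagon_def by simp

lemma abs_eq_sign_mult:
  fixes s x :: real
  assumes "\<bar>s\<bar> = 1" and "0 < s * x"
  shows "\<bar>x\<bar> = s * x"
  using assms by (auto simp: abs_if zero_less_mult_iff)

lemma tri_area_oriented:
  assumes "\<bar>s\<bar> = 1" and "0 < s * cross a b c"
  shows "tri_area a b c = s / 2 * cross a b c"
  using abs_eq_sign_mult[OF assms] by (simp add: tri_area_def)

lemma vtri_oriented_hexagon:
  assumes "\<bar>s\<bar> = 1" and "oriented_hexagon s P"
  shows "vtri P i = s / 2 * cross (P ((i+5) mod 6)) (P (i mod 6)) (P ((i+1) mod 6))"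
proof -
  have succ: "((i+5) mod 6 + 1) mod 6 = i mod 6"
    by (simp add: mod_Suc_eq mod_add_left_eq)
  have "i mod 6 < 6" by simp
  then have "i mod 6 \<in> {0, 1, 2, 3, 4, 5}" by auto
  moreover have "(i+1) mod 6 = (i mod 6 + 1) mod 6" and "(i+5) mod 6 = (i mod 6 + 5) mod 6"
    by (simp_all add: mod_Suc_eq mod_add_left_eq)
  ultimately have "(i+1) mod 6 \<noteq> (i+5) mod 6" and "(i+1) mod 6 \<noteq> i mod 6"
    by auto
  with assms(2) succ have "0 < s * cross (P ((i+5) mod 6)) (P (i mod 6)) (P ((i+1) mod 6))"
    unfolding oriented_hexagon_def by (metis mod_less_divisor zero_less_numeral)
  then show ?thesis by (simp add: vtri_def tri_area_oriented[OF assms(1)])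
qed

lemma polygon_area_oriented_hexagon:
  assumes "\<bar>s\<bar> = 1" and "oriented_hexagon s P"
  shows "polygon_area 6 P = s / 2 * (\<Sum>i<5. cross (P 0) (P i) (P (Suc i)))"
proof -
  have pos: "0 < s * cross (P 0) (P i) (P (Suc i))" if "0 < i" and "i < 5" for i
  proof -
    have "(i + 1) mod 6 = Suc i" and "i < 6" and "0 \<noteq> Suc i" and "0 \<noteq> i"
      using that by simp_all
    then have "0 < s * cross (P i) (P (Suc i)) (P 0)"
      using assms(2) unfolding oriented_hexagon_def by (metis zero_less_numeral)
    then show ?thesis by (simp only: cross_rotate[of "P 0"])
  qed
  have "0 \<le> s * cross (P 0) (P i) (P (Suc i))" if "i < 5" for i
    using pos[of i] that by (cases "i = 0") (auto simp: cross_degenerate)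
  then have "0 < (\<Sum>i<5. s * cross (P 0) (P i) (P (Suc i)))"
    by (intro sum_pos2[of _ 1]) (auto intro: pos)
  then have "\<bar>\<Sum>i<5. cross (P 0) (P i) (P (Suc i))\<bar>
      = s * (\<Sum>i<5. cross (P 0) (P i) (P (Suc i)))"
    by (intro abs_eq_sign_mult assms(1)) (simp add: sum_distrib_left)
  then show ?thesis
    using shoelace_sum_fan[of P 5] by (simp add: polygon_area_def)
qed

lemma oriented_hexagon_areas_fan:
  assumes "\<bar>s\<bar> = 1" and "oriented_hexagon s P"
  shows "polygon_area 6 P = s/2 * (cross (P 0) (P 1) (P 2) + cross (P 0) (P 2) (P 3)
      + cross (P 0) (P 3) (P 4) + cross (P 0) (P 4) (P 5))"
    and "tri_area (P 0) (P 1) (P 3) = s/2 * cross (P 0) (P 1) (P 3)"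
    and "vtri P 0 = s/2 * cross (P 0) (P 1) (P 5)"
    and "vtri P 1 = s/2 * cross (P 0) (P 1) (P 2)"
    and "vtri P 2 = s/2 * (cross (P 0) (P 1) (P 2) + cross (P 0) (P 2) (P 3) - cross (P 0) (P 1) (P 3))"
    and "vtri P 3 = s/2 * (cross (P 0) (P 2) (P 3) + cross (P 0) (P 3) (P 4) - cross (P 0) (P 2) (P 4))"
    and "vtri P 4 = s/2 * (cross (P 0) (P 3) (P 4) + cross (P 0) (P 4) (P 5) - cross (P 0) (P 3) (P 5))"
    and "vtri P 5 = s/2 * cross (P 0) (P 4) (P 5)"
proof -
  have vertex: "vtri P 0 = s/2 * cross (P 5) (P 0) (P 1)" "vtri P 1 = s/2 * cross (P 0) (P 1) (P 2)"
    "vtri P 2 = s/2 * cross (P 1) (P 2) (P 3)" "vtri P 3 = s/2 * cross (P 2) (P 3) (P 4)"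
    "vtri P 4 = s/2 * cross (P 3) (P 4) (P 5)" "vtri P 5 = s/2 * cross (P 4) (P 5) (P 0)"
    using vtri_oriented_hexagon[OF assms, of 0] vtri_oriented_hexagon[OF assms, of 1]
      vtri_oriented_hexagon[OF assms, of 2] vtri_oriented_hexagon[OF assms, of 3]
      vtri_oriented_hexagon[OF assms, of 4] vtri_oriented_hexagon[OF assms, of 5]
    \<comment> \<open>simp evaluates \<open>(1 + 1) mod 6\<close> to \<open>Suc (Suc 0)\<close>, not to \<open>2\<close>\<close>
    by (simp_all add: numeral_2_eq_2[symmetric])
  show "polygon_area 6 P = s/2 * (cross (P 0) (P 1) (P 2) + cross (P 0) (P 2) (P 3)
      + cross (P 0) (P 3) (P 4) + cross (P 0) (P 4) (P 5))"
    unfolding polygon_area_oriented_hexagon[OF assms]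
    by (simp add: eval_nat_numeral cross_degenerate)
  have "0 < s * cross (P 0) (P 1) (P 3)"
    using assms(2) unfolding oriented_hexagon_def by force
  then show "tri_area (P 0) (P 1) (P 3) = s/2 * cross (P 0) (P 1) (P 3)"
    by (rule tri_area_oriented[OF assms(1)])
  show "vtri P 0 = s/2 * cross (P 0) (P 1) (P 5)"
    unfolding vertex using cross_rotate[of "P 5" "P 0" "P 1"] by simp
  show "vtri P 1 = s/2 * cross (P 0) (P 1) (P 2)"
    by (fact vertex)
  show "vtri P 2 = s/2 * (cross (P 0) (P 1) (P 2) + cross (P 0) (P 2) (P 3) - cross (P 0) (P 1) (P 3))"
    unfolding vertex using cross_fan_split[of "P 1" "P 2" "P 3" "P 0"] by simp
  show "vtri P 3 = s/2 * (cross (P 0) (P 2) (P 3) + cross (P 0) (P 3) (P 4) - cross (P 0) (P 2) (P 4))"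
    unfolding vertex using cross_fan_split[of "P 2" "P 3" "P 4" "P 0"] by simp
  show "vtri P 4 = s/2 * (cross (P 0) (P 3) (P 4) + cross (P 0) (P 4) (P 5) - cross (P 0) (P 3) (P 5))"
    unfolding vertex using cross_fan_split[of "P 3" "P 4" "P 5" "P 0"] by simp
  show "vtri P 5 = s/2 * cross (P 0) (P 4) (P 5)"
    unfolding vertex using cross_rotate[of "P 0" "P 4" "P 5"] by simp
qed

theorem theorem3:
  fixes P :: "nat \<Rightarrow> real \<times> real"
  assumes "convex_hexagon P"
  defines "A \<equiv> polygon_area 6 P"
      and "p \<equiv> tri_area (P 0) (P 1) (P 3)"
      and "a0 \<equiv> vtri P 0" and "a1 \<equiv> vtri P 1" and "a2 \<equiv> vtri P 2"
      and "a3 \<equiv> vtri P 3" and "a4 \<equiv> vtri P 4" and "a5 \<equiv> vtri P 5"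
  shows "(p - a1) * A^2
    + (a1*a4 + 2*a1*a2 + a1*a5 - p^2 + a1*p + a0*a1 - a2*p - a3*p - a5*p - a4*p - a0*a2 - a0*p) * A
    - a1*a2*a5 - a1*a2*p - a1*a2*a4 - a1*a4*a5 - a1*a2^2 + a2*a3*p + a3*p^2 - a0*a1*a5
    + a0*a2^2 + a4*a5*p - a0*a1*a2 + a0*a2*a5 + a0*p^2 - a0*a1*p + 2*a0*a2*p + a0*a5*p + a3*a4*p = 0"
proof -
  obtain s where s: "\<bar>s\<bar> = 1" and oriented: "oriented_hexagon s P"
    using assms(1) convex_hexagon_iff_oriented by force
  show ?thesis
    unfolding A_def p_def a0_def a1_def a2_def a3_def a4_def a5_def
      hexagon_polynomial_fan_coordinates[where d = "\<lambda>i j. cross (P 0) (P i) (P j)",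
        OF oriented_hexagon_areas_fan[OF s oriented]]
    by (simp only: cross_pluecker) simp
qed

end
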